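(* Let $\{\theta_m\}$ satisfy $\theta_1\ge\theta_2\ge\cdots\ge0$, $\theta_m\to0$; $\mathcal B=\mathcal B(\{\theta_m\})$; $b_1,b_2>0$. There exists $C_2>0$, depending only on $b_1,b_2$ (besides $N$ and $\{\theta_m\}$), such that for all $m,q\in\mathbb N$ with $\theta_{m+1}\le1$ and every $g\in V$ satisfying (H): $\|\mathscr L_g\|_{\mathcal B\to\mathcal B}\le C_2$ and $\|\mathscr L_g^q-K^{(q)}_{g,m}\|_{\mathcal B\to\mathcal B}\le C_2^q\theta_{m+1}^q$.
   Context: $\Sigma_{\mathbf A}^+$ is the one-sided Markov shift of an $N\times N$ zero-one aperiodic matrix $\mathbf A$, $\sigma_{\mathbf A}$ the shift. $\mathrm{var}_k(\phi)=\sup\{|\phi(\omega)-\phi(\omega')|:\omega_j=\omega'_j,\ 0\le j\le k-1\}$; $V=\{\phi:\mathrm{var}_k(\phi)^{1/k}\to0\}$. $(\mathscr L_g\phi)(\omega)=\sum_{\sigma_{\mathbf A}\omega'=\omega}e^{g(\omega')}\phi(\omega')$. $\mathcal B(\{\theta_m\})=\{\phi\in V:\exists C\ge0,\ \mathrm{var}_k(\phi)\le C\theta_{k+1}^k\ \forall k\ge0\}$ with norm $\|\phi\|_\infty+\inf C$. Fix a Borel probability $\mu$ charging all nonempty open sets; $(E_m\phi)(\omega)=\mu([\omega|m])^{-1}\int_{[\omega|m]}\phi\,d\mu$, $[\omega|m]=\{\xi:\xi_j=\omega_j,0\le j\le m-1\}$. $K_{g,m}=\mathscr L_g\circ E_m$,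 $K^{(q)}_{g,m}=\mathscr L_g^q-(\mathscr L_g-K_{g,m})^q$. Condition (H) on $g\in V$: $e^{\max\mathrm{Re}\,g}\le b_1$ and $\mathrm{var}_k(g)\le b_2\theta_k^k$ for all $k\in\mathbb N$. *)

theory Defs
  imports "HOL-Probability.Probability"
begin

type_synonym seq = "nat \<Rightarrow> nat"
type_synonym cfun = "seq \<Rightarrow> complex"

definition zero_one_matrix :: "nat \<Rightarrow> (nat \<Rightarrow> nat \<Rightarrow> nat) \<Rightarrow> bool" where
  "zero_one_matrix N A \<longleftrightarrow> (\<forall>i<N. \<forall>j<N. A i j = 0 \<or> A i j = 1)"

fun mat_pow :: "nat \<Rightarrow> (nat \<Rightarrow> nat \<Rightarrow> nat) \<Rightarrow> nat \<Rightarrow> nat \<Rightarrow> nat \<Rightarrow> nat" where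
  "mat_pow N A 0 i j = (if i = j then 1 else 0)"
| "mat_pow N A (Suc n) i j = (\<Sum>k<N. mat_pow N A n i k * A k j)"

definition aperiodic :: "nat \<Rightarrow> (nat \<Rightarrow> nat \<Rightarrow> nat) \<Rightarrow> bool" where
  "aperiodic N A \<longleftrightarrow> (\<exists>M\<ge>1. \<forall>i<N. \<forall>j<N. mat_pow N A M i j > 0)"

definition Sigma_A :: "nat \<Rightarrow> (nat \<Rightarrow> nat \<Rightarrow> nat) \<Rightarrow> seq set" where
  "Sigma_A N A = {\<omega>. (\<forall>j. \<omega> j < N) \<and> (\<forall>j. A (\<omega> j) (\<omega> (Suc j)) = 1)}"

definition scons :: "nat \<Rightarrow> seq \<Rightarrow> seq" where
  "scons a \<omega> = (\<lambda>j. if j = 0 then a else \<omega> (j - 1))"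

definition var :: "nat \<Rightarrow> (nat \<Rightarrow> nat \<Rightarrow> nat) \<Rightarrow> nat \<Rightarrow> cfun \<Rightarrow> ereal" where
  "var N A k \<phi> = (SUP p \<in> {(\<omega>, \<omega>'). \<omega> \<in> Sigma_A N A \<and> \<omega>' \<in> Sigma_A N A \<and> (\<forall>j<k. \<omega> j = \<omega>' j)}.
       ereal (cmod (\<phi> (fst p) - \<phi> (snd p))))"

definition Vspace :: "nat \<Rightarrow> (nat \<Rightarrow> nat \<Rightarrow> nat) \<Rightarrow> cfun set" where
  "Vspace N A = {\<phi>. (\<forall>\<^sub>F k in sequentially. var N A k \<phi> < \<infinity>) \<and>
       (\<lambda>k. real_of_ereal (var N A k \<phi>) powr (1 / real k)) \<longlonglongrightarrow> 0}"

definition transfer :: "nat \<Rightarrow> (nat \<Rightarrow> nat \<Rightarrow> nat) \<Rightarrow> cfun \<Rightarrow> cfun \<Rightarrow> cfun" where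
  "transfer N A g \<phi> \<omega> = (\<Sum>a\<in>{a. a < N \<and> A a (\<omega> 0) = 1}. exp (g (scons a \<omega>)) * \<phi> (scons a \<omega>))"

definition Bspace :: "nat \<Rightarrow> (nat \<Rightarrow> nat \<Rightarrow> nat) \<Rightarrow> (nat \<Rightarrow> real) \<Rightarrow> cfun set" where
  "Bspace N A \<theta> = {\<phi> \<in> Vspace N A. \<exists>C\<ge>0. \<forall>k. var N A k \<phi> \<le> ereal (C * \<theta> (k + 1) ^ k)}"

text \<open>Sup norm on Sigma_A (0 inserted only to make the empty case well defined).\<close>
definition supnorm :: "nat \<Rightarrow> (nat \<Rightarrow> nat \<Rightarrow> nat) \<Rightarrow> cfun \<Rightarrow> real" where
  "supnorm N A \<phi> = Sup (insert 0 ((\<lambda>\<omega>. cmod (\<phi> \<omega>)) ` Sigma_A N A))"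

definition Bnorm :: "nat \<Rightarrow> (nat \<Rightarrow> nat \<Rightarrow> nat) \<Rightarrow> (nat \<Rightarrow> real) \<Rightarrow> cfun \<Rightarrow> real" where
  "Bnorm N A \<theta> \<phi> = supnorm N A \<phi> + Inf {C. C \<ge> 0 \<and> (\<forall>k. var N A k \<phi> \<le> ereal (C * \<theta> (k + 1) ^ k))}"

definition opnorm_le :: "nat \<Rightarrow> (nat \<Rightarrow> nat \<Rightarrow> nat) \<Rightarrow> (nat \<Rightarrow> real) \<Rightarrow> (cfun \<Rightarrow> cfun) \<Rightarrow> real \<Rightarrow> bool" where
  "opnorm_le N A \<theta> T c \<longleftrightarrow> (\<forall>\<phi>\<in>Bspace N A \<theta>. T \<phi> \<in> Bspace N A \<theta> \<and>
       Bnorm N A \<theta> (T \<phi>) \<le> c * Bnorm N A \<theta> \<phi>)"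

definition cyl :: "nat \<Rightarrow> (nat \<Rightarrow> nat \<Rightarrow> nat) \<Rightarrow> seq \<Rightarrow> nat \<Rightarrow> seq set" where
  "cyl N A \<omega> m = {\<xi> \<in> Sigma_A N A. \<forall>j<m. \<xi> j = \<omega> j}"

definition good_measure :: "nat \<Rightarrow> (nat \<Rightarrow> nat \<Rightarrow> nat) \<Rightarrow> seq measure \<Rightarrow> bool" where
  "good_measure N A \<mu> \<longleftrightarrow> prob_space \<mu> \<and> space \<mu> = Sigma_A N A \<and>
     sets \<mu> = sets (restrict_space borel (Sigma_A N A)) \<and>
     (\<forall>U. open U \<and> U \<inter> Sigma_A N A \<noteq> {} \<longrightarrow> measure \<mu> (U \<inter> Sigma_A N A) > 0)"

definition cond_exp :: "nat \<Rightarrow> (nat \<Rightarrow> nat \<Rightarrow> nat) \<Rightarrow> seq measure \<Rightarrow> nat \<Rightarrow> cfun \<Rightarrow> cfun" where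
  "cond_exp N A \<mu> m \<phi> \<omega> = (LINT \<xi>:cyl N A \<omega> m|\<mu>. \<phi> \<xi>) / complex_of_real (measure \<mu> (cyl N A \<omega> m))"

definition Kop :: "nat \<Rightarrow> (nat \<Rightarrow> nat \<Rightarrow> nat) \<Rightarrow> seq measure \<Rightarrow> cfun \<Rightarrow> nat \<Rightarrow> cfun \<Rightarrow> cfun" where
  "Kop N A \<mu> g m = transfer N A g \<circ> cond_exp N A \<mu> m"

definition Kq :: "nat \<Rightarrow> (nat \<Rightarrow> nat \<Rightarrow> nat) \<Rightarrow> seq measure \<Rightarrow> cfun \<Rightarrow> nat \<Rightarrow> nat \<Rightarrow> cfun \<Rightarrow> cfun" where
  "Kq N A \<mu> g m q = (\<lambda>\<phi>. (transfer N A g ^^ q) \<phi> -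
       ((\<lambda>\<psi>. transfer N A g \<psi> - Kop N A \<mu> g m \<psi>) ^^ q) \<phi>)"

definition condH :: "nat \<Rightarrow> (nat \<Rightarrow> nat \<Rightarrow> nat) \<Rightarrow> (nat \<Rightarrow> real) \<Rightarrow> real \<Rightarrow> real \<Rightarrow> cfun \<Rightarrow> bool" where
  "condH N A \<theta> b1 b2 g \<longleftrightarrow> (\<forall>\<omega>\<in>Sigma_A N A. exp (Re (g \<omega>)) \<le> b1) \<and>
     (\<forall>k\<ge>1. var N A k g \<le> ereal (b2 * \<theta> k ^ k))"

end

theory Submission
  imports Defs
begin

text \<open>
  The transfer operator raises the variation index by one: the \<open>k\<close>-th variation of
  \<open>transfer N A g \<psi>\<close> is controlled by the \<open>(k+1)\<close>-st variations of \<open>\<psi>\<close> and \<open>g\<close> and by the sup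
  norm of \<open>\<psi>\<close>, and monotonicity of \<open>\<theta>\<close> turns \<open>\<theta>(k+2)^(k+1)\<close> into \<open>\<theta> i * \<theta>(k+1)^k\<close> for
  any \<open>i \<le> k + 2\<close>. Taking \<open>i = 1\<close> bounds the transfer operator on \<open>\<B>\<close>.

  For \<open>\<L>\<^sub>g - K\<^sub>g\<^sub>,\<^sub>m = \<L>\<^sub>g \<circ> (I - E\<^sub>m)\<close> put \<open>\<psi> = \<phi> - E\<^sub>m \<phi>\<close>. Averaging over a cylinder of
  length \<open>m\<close> gives \<open>|\<psi>| \<le> \<parallel>\<phi>\<parallel> \<theta>(m+1)^m\<close>; since \<open>E\<^sub>m \<phi>\<close> is constant on such cylinders, the
  \<open>(k+1)\<close>-st variation of \<open>\<psi>\<close> equals that of \<open>\<phi>\<close> once \<open>k + 1 \<ge> m\<close> (take \<open>i = m + 1\<close>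
  above), and for smaller \<open>k\<close> the sup bound suffices. Either way a factor \<open>\<theta>(m+1)\<close> is gained,
  and \<open>\<L>\<^sub>g\<^sup>q - K\<^sup>(\<^sup>q\<^sup>)\<^sub>g\<^sub>,\<^sub>m = (\<L>\<^sub>g - K\<^sub>g\<^sub>,\<^sub>m)\<^sup>q\<close>.
\<close>

lemma norm_exp_diff_le:
  fixes u w :: complex
  assumes "exp (Re u) \<le> b" and "exp (Re w) \<le> b"
  shows "cmod (exp u - exp w) \<le> 3 * b * cmod (u - w)"
proof -
  have b0: "0 \<le> b" using exp_gt_zero[of "Re w"] assms(2) by linarith
  have eu: "cmod (exp u) \<le> b" and ew: "cmod (exp w) \<le> b"
    using assms by (simp_all add: norm_exp_eq_Re)
  show ?thesis
  proof (cases "cmod (u - w) \<le> 1")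
    case True
    have "cmod (exp (u - w) - 1) \<le> exp (cmod (u - w)) * cmod (u - w)"
      using Taylor_exp_field[of "u - w" 0] by simp
    also have "\<dots> \<le> 3 * cmod (u - w)"
      using True exp_le by (intro mult_right_mono) (auto intro: order_trans)
    finally have "cmod (exp w) * cmod (exp (u - w) - 1) \<le> b * (3 * cmod (u - w))"
      using ew b0 by (intro mult_mono) auto
    moreover have "exp u - exp w = exp w * (exp (u - w) - 1)"
      by (simp add: exp_diff field_simps)
    ultimately show ?thesis by (simp add: norm_mult mult.assoc)
  next
    case False
    have "cmod (exp u - exp w) \<le> cmod (exp u) + cmod (exp w)" by (rule norm_triangle_ineq4)
    also have "\<dots> \<le> 3 * b * cmod (u - w)"
      using eu ew b0 False mult_left_mono[of 1 "cmod (u - w)" "3 * b"] by linarith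
    finally show ?thesis .
  qed
qed

lemma norm_exp_mult_diff_le:
  fixes u w a b :: complex
  assumes "exp (Re u) \<le> B" and "exp (Re w) \<le> B"
  shows "cmod (exp u * a - exp w * b) \<le> B * (cmod (a - b) + 3 * cmod (u - w) * cmod b)"
proof -
  have "exp u * a - exp w * b = exp u * (a - b) + (exp u - exp w) * b"
    by (simp add: algebra_simps)
  then have "cmod (exp u * a - exp w * b) \<le> cmod (exp u) * cmod (a - b) + cmod (exp u - exp w) * cmod b"
    by (metis norm_mult norm_triangle_ineq)
  also have "\<dots> \<le> B * cmod (a - b) + 3 * B * cmod (u - w) * cmod b"
    using assms norm_exp_diff_le[OF assms] exp_gt_zero[of "Re u"]
    by (intro add_mono mult_right_mono) (auto simp: norm_exp_eq_Re)
  finally show ?thesis by (simp add: algebra_simps)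
qed

lemma power_powr_inverse:
  fixes t :: real
  assumes "0 \<le> t" and "0 < k"
  shows "(t ^ k) powr (1 / real k) = t"
proof (cases "t = 0")
  case False
  then have "t ^ k = t powr real k" using assms(1) by (simp add: powr_realpow)
  then show ?thesis using assms by (simp add: powr_powr)
qed (use assms in simp)

lemma open_cylinder: "open {\<xi>::nat \<Rightarrow> nat. \<forall>j<k. \<xi> j = x j}"
proof -
  have "{\<xi>::nat \<Rightarrow> nat. \<forall>j<k. \<xi> j = x j} = Pi\<^sub>E UNIV (\<lambda>j. if j < k then {x j} else UNIV)"
    by (auto simp: PiE_def Pi_def extensional_def split: if_splits)
  moreover have "open (Pi\<^sub>E UNIV (\<lambda>j. if j < k then {x j} else (UNIV :: nat set)))"
    by (rule open_PiE) (auto intro: finite_subset[of _ "{..<k}"] simp: discrete_topology_class.open_discrete)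
  ultimately show ?thesis by simp
qed

lemma shifted_power_LIMSEQ_zero:
  fixes \<theta> :: "nat \<Rightarrow> real"
  assumes "\<theta> \<longlonglongrightarrow> 0"
  shows "(\<lambda>k. \<theta> (k + 1) ^ k) \<longlonglongrightarrow> 0"
proof (rule Lim_null_comparison)
  have "\<forall>\<^sub>F n in sequentially. norm (\<theta> n) < 1/2"
    using tendsto_norm_zero[OF assms] by (rule order_tendstoD) simp
  then obtain M where M: "\<And>n. n \<ge> M \<Longrightarrow> norm (\<theta> n) < 1/2"
    by (auto simp: eventually_sequentially)
  show "\<forall>\<^sub>F k in sequentially. norm (\<theta> (k + 1) ^ k) \<le> (1/2) ^ k"
    unfolding eventually_sequentially
  proof (intro exI allI impI)
    fix k assume "M \<le> k"
    then have "norm (\<theta> (k + 1)) \<le> 1/2" using M by (simp add: less_imp_le)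
    then show "norm (\<theta> (k + 1) ^ k) \<le> (1/2) ^ k"
      unfolding norm_power by (intro power_mono) auto
  qed
  show "(\<lambda>k. (1/2::real) ^ k) \<longlonglongrightarrow> 0" by (rule LIMSEQ_power_zero) simp
qed

lemma theta_antimono:
  fixes \<theta> :: "nat \<Rightarrow> real"
  assumes mono: "\<forall>m\<ge>1. \<theta> (Suc m) \<le> \<theta> m" and "1 \<le> i" and "i \<le> j"
  shows "\<theta> j \<le> \<theta> i"
  using \<open>i \<le> j\<close>
proof (induction j rule: dec_induct)
  case (step n)
  then show ?case using mono \<open>1 \<le> i\<close> by (meson le_trans order_trans)
qed simp

lemma theta_power_Suc_le:
  fixes \<theta> :: "nat \<Rightarrow> real"
  assumes mono: "\<forall>m\<ge>1. \<theta> (Suc m) \<le> \<theta> m" and nonneg: "\<forall>m\<ge>1. 0 \<le> \<theta> m"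
    and "1 \<le> i" and "i \<le> k + 2"
  shows "\<theta> (k + 2) ^ (k + 1) \<le> \<theta> i * \<theta> (k + 1) ^ k"
proof -
  have "\<theta> (k + 2) \<le> \<theta> i" and "\<theta> (k + 2) \<le> \<theta> (k + 1)"
    using theta_antimono[OF mono] assms(3,4) by auto
  then have "\<theta> (k + 2) * \<theta> (k + 2) ^ k \<le> \<theta> i * \<theta> (k + 1) ^ k"
    using nonneg \<open>1 \<le> i\<close> by (intro mult_mono power_mono) auto
  then show ?thesis by simp
qed

lemma theta_power_le_shifted:
  fixes \<theta> :: "nat \<Rightarrow> real"
  assumes mono: "\<forall>m\<ge>1. \<theta> (Suc m) \<le> \<theta> m" and nonneg: "\<forall>m\<ge>1. 0 \<le> \<theta> m"
    and "k < m" and "\<theta> (m + 1) \<le> 1"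
  shows "\<theta> (m + 1) ^ m \<le> \<theta> (m + 1) * \<theta> (k + 1) ^ k"
proof -
  let ?\<tau> = "\<theta> (m + 1)"
  have \<tau>0: "0 \<le> ?\<tau>" using nonneg by simp
  have "?\<tau> ^ (m - k) \<le> ?\<tau> ^ 1"
    using assms(3,4) \<tau>0 by (intro power_decreasing) auto
  moreover have "?\<tau> ^ k \<le> \<theta> (k + 1) ^ k"
    using theta_antimono[OF mono, of "k + 1" "m + 1"] assms(3) \<tau>0 by (intro power_mono) auto
  ultimately have "?\<tau> ^ (m - k) * ?\<tau> ^ k \<le> ?\<tau> * \<theta> (k + 1) ^ k"
    using \<tau>0 by (intro mult_mono) auto
  then show ?thesis using assms(3) by (simp flip: power_add)
qed

section \<open>Variations and the space \<open>\<B>\<close>\<close>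

lemma var_le_ereal_iff:
  "var N A k \<phi> \<le> ereal r \<longleftrightarrow>
     (\<forall>x\<in>Sigma_A N A. \<forall>y\<in>Sigma_A N A. (\<forall>j<k. x j = y j) \<longrightarrow> cmod (\<phi> x - \<phi> y) \<le> r)"
  unfolding var_def by (auto simp: SUP_le_iff)

lemma real_of_ereal_var_nonneg: "0 \<le> real_of_ereal (var N A k \<phi>)"
proof -
  let ?P = "{(\<omega>, \<omega>'). \<omega> \<in> Sigma_A N A \<and> \<omega>' \<in> Sigma_A N A \<and> (\<forall>j<k. \<omega> j = \<omega>' j)}"
  show ?thesis
  proof (cases "?P = {}")
    case True
    have "var N A k \<phi> = -\<infinity>" unfolding var_def True by (simp add: bot_ereal_def)
    then show ?thesis by simp
  next
    case False
    then obtain p where "p \<in> ?P" by blast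
    then have "ereal (cmod (\<phi> (fst p) - \<phi> (snd p))) \<le> var N A k \<phi>"
      unfolding var_def by (rule SUP_upper)
    then show ?thesis by (intro real_of_ereal_pos) (auto intro: order_trans[rotated])
  qed
qed

definition Bseminorm :: "nat \<Rightarrow> (nat \<Rightarrow> nat \<Rightarrow> nat) \<Rightarrow> (nat \<Rightarrow> real) \<Rightarrow> cfun \<Rightarrow> real" where
  "Bseminorm N A \<theta> \<phi> = Inf {C. C \<ge> 0 \<and> (\<forall>k. var N A k \<phi> \<le> ereal (C * \<theta> (k + 1) ^ k))}"

lemma Bnorm_eq: "Bnorm N A \<theta> \<phi> = supnorm N A \<phi> + Bseminorm N A \<theta> \<phi>"
  unfolding Bnorm_def Bseminorm_def ..

lemma supnorm_le:
  assumes "0 \<le> s" and "\<forall>x\<in>Sigma_A N A. cmod (\<phi> x) \<le> s"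
  shows "supnorm N A \<phi> \<le> s"
  unfolding supnorm_def using assms by (intro cSup_least) auto

lemma Bseminorm_le:
  assumes "0 \<le> c" and "\<forall>k. var N A k \<phi> \<le> ereal (c * \<theta> (k + 1) ^ k)"
  shows "Bseminorm N A \<theta> \<phi> \<le> c"
  unfolding Bseminorm_def using assms by (intro cInf_lower) (auto simp: bdd_below_def)

lemma Bseminorm_nonneg:
  assumes "\<phi> \<in> Bspace N A \<theta>"
  shows "0 \<le> Bseminorm N A \<theta> \<phi>"
  using assms unfolding Bspace_def Bseminorm_def by (intro cInf_greatest) auto

lemma var_le_Bseminorm:
  assumes nonneg: "\<forall>m\<ge>1. 0 \<le> \<theta> m" and B: "\<phi> \<in> Bspace N A \<theta>"
  shows "var N A k \<phi> \<le> ereal (Bseminorm N A \<theta> \<phi> * \<theta> (k + 1) ^ k)"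
  unfolding var_le_ereal_iff
proof (intro ballI impI)
  fix x y assume x: "x \<in> Sigma_A N A" and y: "y \<in> Sigma_A N A" and xy: "\<forall>j<k. x j = y j"
  let ?S = "{C. C \<ge> 0 \<and> (\<forall>k. var N A k \<phi> \<le> ereal (C * \<theta> (k + 1) ^ k))}"
  let ?t = "\<theta> (k + 1) ^ k"
  have le_all: "cmod (\<phi> x - \<phi> y) \<le> C * ?t" if "C \<in> ?S" for C
    using that x y xy var_le_ereal_iff[of N A k \<phi> "C * ?t"] by auto
  obtain C where C: "C \<in> ?S" using B unfolding Bspace_def by auto
  have "0 \<le> ?t" using nonneg by simp
  then consider "?t = 0" | "0 < ?t" by linarith
  then show "cmod (\<phi> x - \<phi> y) \<le> Bseminorm N A \<theta> \<phi> * ?t"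
  proof cases
    case 1
    then show ?thesis using le_all[OF C] by (metis mult_zero_right)
  next
    case 2
    have "cmod (\<phi> x - \<phi> y) / ?t \<le> Bseminorm N A \<theta> \<phi>"
      unfolding Bseminorm_def using C le_all 2
      by (intro cInf_greatest) (auto simp: divide_le_eq)
    then show ?thesis using 2 by (simp add: divide_le_eq)
  qed
qed

lemma var_Suc_le_Bseminorm:
  assumes mono: "\<forall>m\<ge>1. \<theta> (Suc m) \<le> \<theta> m" and nonneg: "\<forall>m\<ge>1. 0 \<le> \<theta> m"
    and B: "\<phi> \<in> Bspace N A \<theta>"
  shows "var N A (k + 1) \<phi> \<le> ereal (\<theta> 1 * Bseminorm N A \<theta> \<phi> * \<theta> (k + 1) ^ k)"
proof -
  have "\<theta> (k + 2) ^ (k + 1) \<le> \<theta> 1 * \<theta> (k + 1) ^ k"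
    by (rule theta_power_Suc_le[OF mono nonneg]) auto
  then have "Bseminorm N A \<theta> \<phi> * \<theta> (k + 2) ^ (k + 1) \<le> Bseminorm N A \<theta> \<phi> * (\<theta> 1 * \<theta> (k + 1) ^ k)"
    using Bseminorm_nonneg[OF B] by (rule mult_left_mono)
  then have "ereal (Bseminorm N A \<theta> \<phi> * \<theta> (k + 2) ^ (k + 1))
      \<le> ereal (\<theta> 1 * Bseminorm N A \<theta> \<phi> * \<theta> (k + 1) ^ k)"
    by (simp add: mult_ac)
  moreover have "var N A (k + 1) \<phi> \<le> ereal (Bseminorm N A \<theta> \<phi> * \<theta> (k + 2) ^ (k + 1))"
    using var_le_Bseminorm[OF nonneg B, of "k + 1"] by simp
  ultimately show ?thesis by (rule order_trans[rotated])
qed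

lemma norm_diff_le_Bseminorm:
  assumes "\<forall>m\<ge>1. 0 \<le> \<theta> m" and "\<phi> \<in> Bspace N A \<theta>"
    and "x \<in> Sigma_A N A" and "y \<in> Sigma_A N A" and "\<forall>j<k. x j = y j"
  shows "cmod (\<phi> x - \<phi> y) \<le> Bseminorm N A \<theta> \<phi> * \<theta> (k + 1) ^ k"
  using var_le_Bseminorm[OF assms(1,2), of k] assms(3-5) unfolding var_le_ereal_iff by blast

lemma Bspace_bounded:
  assumes "\<phi> \<in> Bspace N A \<theta>"
  shows "bdd_above ((\<lambda>\<omega>. cmod (\<phi> \<omega>)) ` Sigma_A N A)"
proof (cases "Sigma_A N A = {}")
  case False
  then obtain x0 where x0: "x0 \<in> Sigma_A N A" by blast
  obtain C where "\<forall>k. var N A k \<phi> \<le> ereal (C * \<theta> (k + 1) ^ k)"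
    using assms unfolding Bspace_def by blast
  then have "var N A 0 \<phi> \<le> ereal C" by (drule_tac x = 0 in spec) simp
  then have "cmod (\<phi> x - \<phi> x0) \<le> C" if "x \<in> Sigma_A N A" for x
    using that x0 unfolding var_le_ereal_iff by blast
  then have "cmod (\<phi> x) \<le> cmod (\<phi> x0) + C" if "x \<in> Sigma_A N A" for x
    using that norm_triangle_sub[of "\<phi> x" "\<phi> x0"] by (smt (verit))
  then show ?thesis by (intro bdd_aboveI2) blast
qed simp

lemma
  assumes "\<phi> \<in> Bspace N A \<theta>"
  shows supnorm_nonneg: "0 \<le> supnorm N A \<phi>"
    and norm_le_supnorm: "x \<in> Sigma_A N A \<Longrightarrow> cmod (\<phi> x) \<le> supnorm N A \<phi>"
proof -
  have bdd: "bdd_above (insert 0 ((\<lambda>\<omega>. cmod (\<phi> \<omega>)) ` Sigma_A N A))"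
    using Bspace_bounded[OF assms] by simp
  show "0 \<le> supnorm N A \<phi>"
    unfolding supnorm_def by (rule cSup_upper[OF _ bdd]) simp
  show "cmod (\<phi> x) \<le> supnorm N A \<phi>" if "x \<in> Sigma_A N A"
    unfolding supnorm_def using that by (intro cSup_upper[OF _ bdd]) simp
qed

lemma Vspace_memI:
  fixes \<theta> :: "nat \<Rightarrow> real"
  assumes nonneg: "\<forall>m\<ge>1. 0 \<le> \<theta> m" and lim: "\<theta> \<longlonglongrightarrow> 0" and "0 \<le> c"
    and var_le: "\<forall>k. var N A k \<phi> \<le> ereal (c * \<theta> (k + 1) ^ k)"
  shows "\<phi> \<in> Vspace N A"
  unfolding Vspace_def
proof (intro CollectI conjI)
  show "\<forall>\<^sub>F k in sequentially. var N A k \<phi> < \<infinity>"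
  proof (intro always_eventually allI)
    fix k
    show "var N A k \<phi> < \<infinity>"
      using var_le[rule_format, of k] by (rule le_less_trans) simp
  qed
  let ?r = "\<lambda>k. real_of_ereal (var N A k \<phi>)"
  have r_le: "?r k \<le> (c + 1) * \<theta> (k + 1) ^ k" for k
  proof -
    have t0: "0 \<le> \<theta> (k + 1) ^ k" using nonneg by simp
    have "var N A k \<phi> \<le> ereal (c * \<theta> (k + 1) ^ k)" using var_le by blast
    then have "real_of_ereal (var N A k \<phi>) \<le> c * \<theta> (k + 1) ^ k"
      using \<open>0 \<le> c\<close> t0 by (cases "var N A k \<phi>") auto
    also have "\<dots> \<le> (c + 1) * \<theta> (k + 1) ^ k"
      using t0 by (simp add: distrib_right)
    finally show ?thesis .
  qed
  show "(\<lambda>k. ?r k powr (1 / real k)) \<longlonglongrightarrow> 0"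
  proof (rule Lim_null_comparison)
    show "\<forall>\<^sub>F k in sequentially. norm (?r k powr (1 / real k)) \<le> (c + 1) powr (1 / real k) * \<theta> (k + 1)"
      unfolding eventually_sequentially
    proof (intro exI[of _ 1] allI impI)
      fix k :: nat assume "1 \<le> k"
      have t0: "0 \<le> \<theta> (k + 1)" using nonneg by simp
      have "norm (?r k powr (1 / real k)) \<le> ((c + 1) * \<theta> (k + 1) ^ k) powr (1 / real k)"
        using r_le real_of_ereal_var_nonneg by (auto intro: powr_mono2)
      also have "\<dots> = (c + 1) powr (1 / real k) * \<theta> (k + 1)"
        using \<open>0 \<le> c\<close> t0 \<open>1 \<le> k\<close> by (simp add: powr_mult power_powr_inverse)
      finally show "norm (?r k powr (1 / real k)) \<le> (c + 1) powr (1 / real k) * \<theta> (k + 1)" .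
    qed
    have "(\<lambda>k. (c + 1) powr (1 / real k)) \<longlonglongrightarrow> (c + 1) powr 0"
      using \<open>0 \<le> c\<close> by (intro tendsto_intros) auto
    moreover have "(\<lambda>k. \<theta> (k + 1)) \<longlonglongrightarrow> 0"
      using LIMSEQ_Suc[OF lim] by simp
    ultimately show "(\<lambda>k. (c + 1) powr (1 / real k) * \<theta> (k + 1)) \<longlonglongrightarrow> 0"
      using tendsto_mult by (metis mult_zero_right)
  qed
qed

lemma Bspace_memI:
  fixes \<theta> :: "nat \<Rightarrow> real"
  assumes "\<forall>m\<ge>1. 0 \<le> \<theta> m" and "\<theta> \<longlonglongrightarrow> 0" and "0 \<le> c"
    and "\<forall>k. var N A k \<phi> \<le> ereal (c * \<theta> (k + 1) ^ k)"
  shows "\<phi> \<in> Bspace N A \<theta>"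
  using Vspace_memI[OF assms] assms(3,4) unfolding Bspace_def by blast

lemma Bspace_continuous_on:
  fixes \<theta> :: "nat \<Rightarrow> real"
  assumes nonneg: "\<forall>m\<ge>1. 0 \<le> \<theta> m" and lim: "\<theta> \<longlonglongrightarrow> 0" and B: "\<phi> \<in> Bspace N A \<theta>"
  shows "continuous_on (Sigma_A N A) \<phi>"
  unfolding continuous_on_topological
proof (intro ballI allI impI)
  fix x U assume x: "x \<in> Sigma_A N A" and "open U" and "\<phi> x \<in> U"
  then obtain e where "e > 0" and e: "\<And>y. dist y (\<phi> x) < e \<Longrightarrow> y \<in> U"
    unfolding open_dist by blast
  have "(\<lambda>k. Bseminorm N A \<theta> \<phi> * \<theta> (k + 1) ^ k) \<longlonglongrightarrow> 0"
    using tendsto_mult_right_zero[OF shifted_power_LIMSEQ_zero[OF lim]] by simp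
  then have "\<forall>\<^sub>F k in sequentially. Bseminorm N A \<theta> \<phi> * \<theta> (k + 1) ^ k < e"
    using \<open>e > 0\<close> by (rule order_tendstoD)
  then obtain k where k: "Bseminorm N A \<theta> \<phi> * \<theta> (k + 1) ^ k < e"
    by (auto simp: eventually_sequentially)
  let ?Z = "{\<xi>::nat \<Rightarrow> nat. \<forall>j<k. \<xi> j = x j}"
  have "\<phi> y \<in> U" if "y \<in> Sigma_A N A" and "y \<in> ?Z" for y
    using norm_diff_le_Bseminorm[OF nonneg B that(1) x, of k] that(2) k
    by (intro e) (simp add: dist_norm)
  then show "\<exists>V. open V \<and> x \<in> V \<and> (\<forall>y\<in>Sigma_A N A. y \<in> V \<longrightarrow> \<phi> y \<in> U)"
    using open_cylinder[of k x] by blast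
qed

section \<open>Conditional expectation on cylinders\<close>

lemma cond_exp_cong:
  assumes "\<forall>j<k. \<omega> j = \<omega>' j" and "m \<le> k"
  shows "cond_exp N A \<mu> m \<phi> \<omega> = cond_exp N A \<mu> m \<phi> \<omega>'"
proof -
  have "cyl N A \<omega> m = cyl N A \<omega>' m" unfolding cyl_def using assms by auto
  then show ?thesis unfolding cond_exp_def by simp
qed

lemma
  assumes "good_measure N A \<mu>" and "\<omega> \<in> Sigma_A N A"
  shows sets_cyl: "cyl N A \<omega> m \<in> sets \<mu>"
    and measure_cyl_pos: "0 < measure \<mu> (cyl N A \<omega> m)"
proof -
  have cyl_eq: "cyl N A \<omega> m = {\<xi>. \<forall>j<m. \<xi> j = \<omega> j} \<inter> Sigma_A N A"
    unfolding cyl_def by auto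
  show "cyl N A \<omega> m \<in> sets \<mu>"
    using assms(1) borel_open[OF open_cylinder] unfolding good_measure_def cyl_eq
    by (auto simp: sets_restrict_space)
  show "0 < measure \<mu> (cyl N A \<omega> m)"
    using assms open_cylinder unfolding good_measure_def cyl_eq by blast
qed

lemma norm_sub_cond_exp_le:
  assumes gm: "good_measure N A \<mu>" and cont: "continuous_on (Sigma_A N A) \<phi>"
    and bnd: "\<forall>x\<in>Sigma_A N A. cmod (\<phi> x) \<le> S" and \<omega>: "\<omega> \<in> Sigma_A N A"
    and osc: "\<forall>\<xi>\<in>cyl N A \<omega> m. cmod (\<phi> \<omega> - \<phi> \<xi>) \<le> r"
  shows "cmod (\<phi> \<omega> - cond_exp N A \<mu> m \<phi> \<omega>) \<le> r"
proof -
  have sp: "space \<mu> = Sigma_A N A" and st: "sets \<mu> = sets (restrict_space borel (Sigma_A N A))"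
    and "prob_space \<mu>"
    using gm unfolding good_measure_def by auto
  interpret prob_space \<mu> by fact
  define Z where "Z = cyl N A \<omega> m"
  have "\<omega> \<in> Z" unfolding Z_def cyl_def using \<omega> by simp
  have Z_sets: "Z \<in> sets \<mu>" and Z_pos: "measure \<mu> Z > 0"
    unfolding Z_def using sets_cyl measure_cyl_pos gm \<omega> by auto
  have Z_space: "Z \<subseteq> space \<mu>" using sp unfolding Z_def cyl_def by auto
  have meas: "\<phi> \<in> borel_measurable \<mu>"
    unfolding measurable_cong_sets[OF st refl]
    by (rule borel_measurable_continuous_on_restrict[OF cont])
  have "0 \<le> r" using osc \<open>\<omega> \<in> Z\<close> unfolding Z_def by force
  have "0 \<le> S" using bnd \<omega> by (meson norm_ge_zero order_trans)
  have int_ind: "integrable \<mu> (indicator Z :: _ \<Rightarrow> real)"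
    using Z_sets by (intro integrable_real_indicator) (auto simp: less_top[symmetric])
  let ?f = "\<lambda>\<xi>. indicator Z \<xi> *\<^sub>R \<phi> \<xi>"
  let ?c = "\<lambda>\<xi>. indicator Z \<xi> *\<^sub>R \<phi> \<omega>"
  have int_f: "integrable \<mu> ?f"
    using bnd \<open>0 \<le> S\<close> sp meas Z_sets
    by (intro integrable_const_bound[where B = S] AE_I2) (auto simp: indicator_def)
  have int_c: "integrable \<mu> ?c"
    using int_ind by (rule integrable_scaleR_left)
  have c_int: "integral\<^sup>L \<mu> ?c = measure \<mu> Z *\<^sub>R \<phi> \<omega>"
    using Z_space by (subst integral_scaleR_left[OF int_ind]) (simp add: Int_absorb2)
  have "cond_exp N A \<mu> m \<phi> \<omega> = integral\<^sup>L \<mu> ?f / measure \<mu> Z"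
    unfolding cond_exp_def Z_def set_lebesgue_integral_def by simp
  then have "\<phi> \<omega> - cond_exp N A \<mu> m \<phi> \<omega> = (integral\<^sup>L \<mu> ?c - integral\<^sup>L \<mu> ?f) / measure \<mu> Z"
    unfolding c_int using Z_pos by (simp add: scaleR_conv_of_real field_simps)
  also have "\<dots> = integral\<^sup>L \<mu> (\<lambda>\<xi>. ?c \<xi> - ?f \<xi>) / measure \<mu> Z"
    using int_c int_f by simp
  finally have "\<phi> \<omega> - cond_exp N A \<mu> m \<phi> \<omega> = integral\<^sup>L \<mu> (\<lambda>\<xi>. ?c \<xi> - ?f \<xi>) / measure \<mu> Z" .
  moreover have "norm (integral\<^sup>L \<mu> (\<lambda>\<xi>. ?c \<xi> - ?f \<xi>)) \<le> measure \<mu> Z * r"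
  proof -
    have "norm (integral\<^sup>L \<mu> (\<lambda>\<xi>. ?c \<xi> - ?f \<xi>)) \<le> integral\<^sup>L \<mu> (\<lambda>\<xi>. norm (?c \<xi> - ?f \<xi>))"
      by (rule integral_norm_bound)
    also have "\<dots> \<le> integral\<^sup>L \<mu> (\<lambda>\<xi>. indicator Z \<xi> * r)"
    proof (rule integral_mono)
      show "integrable \<mu> (\<lambda>\<xi>. norm (?c \<xi> - ?f \<xi>))" using int_c int_f by simp
      show "integrable \<mu> (\<lambda>\<xi>. indicator Z \<xi> * r)" using int_ind by simp
      show "norm (?c x - ?f x) \<le> indicator Z x * r" for x
        using osc \<open>0 \<le> r\<close> unfolding Z_def
        by (auto simp: indicator_def simp flip: scaleR_diff_right)
    qed
    also have "\<dots> = measure \<mu> Z * r" using Z_space by (simp add: Int_absorb2)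
    finally show ?thesis .
  qed
  ultimately show ?thesis using Z_pos by (simp add: norm_divide divide_le_eq mult.commute)
qed

lemma norm_sub_cond_exp_le_Bseminorm:
  fixes \<theta> :: "nat \<Rightarrow> real"
  assumes nonneg: "\<forall>m\<ge>1. 0 \<le> \<theta> m" and lim: "\<theta> \<longlonglongrightarrow> 0" and gm: "good_measure N A \<mu>"
    and B: "\<phi> \<in> Bspace N A \<theta>" and \<omega>: "\<omega> \<in> Sigma_A N A"
  shows "cmod (\<phi> \<omega> - cond_exp N A \<mu> m \<phi> \<omega>) \<le> Bseminorm N A \<theta> \<phi> * \<theta> (m + 1) ^ m"
proof (rule norm_sub_cond_exp_le[OF gm Bspace_continuous_on[OF nonneg lim B] _ \<omega>])
  show "\<forall>x\<in>Sigma_A N A. cmod (\<phi> x) \<le> supnorm N A \<phi>"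
    using norm_le_supnorm[OF B] by blast
  show "\<forall>\<xi>\<in>cyl N A \<omega> m. cmod (\<phi> \<omega> - \<phi> \<xi>) \<le> Bseminorm N A \<theta> \<phi> * \<theta> (m + 1) ^ m"
    using norm_diff_le_Bseminorm[OF nonneg B \<omega>] unfolding cyl_def by auto
qed

lemma var_sub_cond_exp_le:
  fixes \<theta> :: "nat \<Rightarrow> real"
  assumes mono: "\<forall>m\<ge>1. \<theta> (Suc m) \<le> \<theta> m" and nonneg: "\<forall>m\<ge>1. 0 \<le> \<theta> m"
    and lim: "\<theta> \<longlonglongrightarrow> 0" and gm: "good_measure N A \<mu>" and B: "\<phi> \<in> Bspace N A \<theta>"
    and "\<theta> (m + 1) \<le> 1"
  shows "var N A (k + 1) (\<lambda>\<omega>. \<phi> \<omega> - cond_exp N A \<mu> m \<phi> \<omega>)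
           \<le> ereal (2 * Bseminorm N A \<theta> \<phi> * \<theta> (m + 1) * \<theta> (k + 1) ^ k)"
  unfolding var_le_ereal_iff
proof (intro ballI impI)
  let ?v = "Bseminorm N A \<theta> \<phi>" and ?\<tau> = "\<theta> (m + 1)"
  let ?\<psi> = "\<lambda>\<omega>. \<phi> \<omega> - cond_exp N A \<mu> m \<phi> \<omega>"
  fix x y assume x: "x \<in> Sigma_A N A" and y: "y \<in> Sigma_A N A" and xy: "\<forall>j<k + 1. x j = y j"
  have v0: "0 \<le> ?v" using Bseminorm_nonneg[OF B] .
  have "0 \<le> ?\<tau> * \<theta> (k + 1) ^ k" using nonneg by simp
  show "cmod (?\<psi> x - ?\<psi> y) \<le> 2 * ?v * ?\<tau> * \<theta> (k + 1) ^ k"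
  proof (cases "m \<le> k + 1")
    case True
    then have "?\<psi> x - ?\<psi> y = \<phi> x - \<phi> y" using cond_exp_cong[OF xy] by simp
    then have "cmod (?\<psi> x - ?\<psi> y) \<le> ?v * \<theta> (k + 2) ^ (k + 1)"
      using norm_diff_le_Bseminorm[OF nonneg B x y xy] by simp
    also have "\<dots> \<le> ?v * (?\<tau> * \<theta> (k + 1) ^ k)"
      using theta_power_Suc_le[OF mono nonneg, of "m + 1" k] True v0
      by (intro mult_left_mono) auto
    also have "\<dots> \<le> 2 * ?v * ?\<tau> * \<theta> (k + 1) ^ k"
      using mult_nonneg_nonneg[OF v0 \<open>0 \<le> ?\<tau> * \<theta> (k + 1) ^ k\<close>]
      by (simp only: mult.assoc)
    finally show ?thesis .
  next
    case False
    have "cmod (?\<psi> x - ?\<psi> y) \<le> cmod (?\<psi> x) + cmod (?\<psi> y)" by (rule norm_triangle_ineq4)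
    also have "\<dots> \<le> 2 * (?v * ?\<tau> ^ m)"
      using norm_sub_cond_exp_le_Bseminorm[OF nonneg lim gm B] x y by (smt (verit))
    also have "?\<tau> ^ m \<le> ?\<tau> * \<theta> (k + 1) ^ k"
      using theta_power_le_shifted[OF mono nonneg _ \<open>?\<tau> \<le> 1\<close>, of k] False by simp
    finally show ?thesis using v0 by (simp add: mult_left_mono mult.assoc)
  qed
qed

lemma scons_in_Sigma_A:
  assumes "\<omega> \<in> Sigma_A N A" and "a < N" and "A a (\<omega> 0) = 1"
  shows "scons a \<omega> \<in> Sigma_A N A"
proof -
  have "A (scons a \<omega> j) (scons a \<omega> (Suc j)) = 1" for j
    using assms unfolding Sigma_A_def scons_def by (cases j) auto
  then show ?thesis using assms unfolding Sigma_A_def by (auto simp: scons_def)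
qed

lemma sum_le_card_mult:
  fixes f :: "nat \<Rightarrow> real"
  assumes "\<And>a. a \<in> I \<Longrightarrow> f a \<le> K" and "I \<subseteq> {..<N}" and "0 \<le> K"
  shows "sum f I \<le> real N * K"
proof -
  have "finite I" using assms(2) finite_subset by blast
  then have "sum f I \<le> real (card I) * K" using sum_bounded_above[of I f K] assms(1) by simp
  also have "\<dots> \<le> real N * K"
    using card_mono[OF _ assms(2)] assms(3) by (intro mult_right_mono) auto
  finally show ?thesis .
qed

lemma norm_transfer_le:
  assumes H: "condH N A \<theta> b1 b2 g" and \<omega>: "\<omega> \<in> Sigma_A N A"
    and bnd: "\<forall>x\<in>Sigma_A N A. cmod (\<psi> x) \<le> S"
  shows "cmod (transfer N A g \<psi> \<omega>) \<le> real N * (b1 * S)"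
proof -
  let ?I = "{a. a < N \<and> A a (\<omega> 0) = 1}"
  have "0 \<le> b1" using H \<omega> unfolding condH_def by (meson exp_ge_zero order_trans)
  have "0 \<le> S" using bnd \<omega> by (meson norm_ge_zero order_trans)
  have "cmod (transfer N A g \<psi> \<omega>) \<le> (\<Sum>a\<in>?I. cmod (exp (g (scons a \<omega>)) * \<psi> (scons a \<omega>)))"
    unfolding transfer_def by (rule norm_sum)
  also have "\<dots> \<le> real N * (b1 * S)"
  proof (rule sum_le_card_mult)
    fix a assume "a \<in> ?I"
    then have x: "scons a \<omega> \<in> Sigma_A N A" using scons_in_Sigma_A \<omega> by blast
    show "cmod (exp (g (scons a \<omega>)) * \<psi> (scons a \<omega>)) \<le> b1 * S"
      unfolding norm_mult using H x bnd \<open>0 \<le> b1\<close> unfolding condH_def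
      by (intro mult_mono) (auto simp: norm_exp_eq_Re)
  qed (use \<open>0 \<le> b1\<close> \<open>0 \<le> S\<close> in auto)
  finally show ?thesis .
qed

lemma norm_transfer_diff_le:
  assumes H: "condH N A \<theta> b1 b2 g" and x: "x \<in> Sigma_A N A" and y: "y \<in> Sigma_A N A"
    and xy: "\<forall>j<k. x j = y j" and "1 \<le> k"
    and bnd: "\<forall>x\<in>Sigma_A N A. cmod (\<psi> x) \<le> S" and osc: "var N A (k + 1) \<psi> \<le> ereal W"
  shows "cmod (transfer N A g \<psi> x - transfer N A g \<psi> y)
           \<le> real N * (b1 * (W + 3 * (b2 * \<theta> (k + 1) ^ (k + 1)) * S))"
proof -
  let ?I = "{a. a < N \<and> A a (x 0) = 1}" and ?G = "b2 * \<theta> (k + 1) ^ (k + 1)"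
  have g_osc: "var N A (k + 1) g \<le> ereal ?G" using H unfolding condH_def by (metis le_add2)
  have "0 \<le> b1" using H x unfolding condH_def by (meson exp_ge_zero order_trans)
  have "0 \<le> S" using bnd x by (meson norm_ge_zero order_trans)
  have "0 \<le> W" using osc x unfolding var_le_ereal_iff by (metis diff_self norm_zero)
  have "0 \<le> ?G" using g_osc x unfolding var_le_ereal_iff by (metis diff_self norm_zero)
  have "x 0 = y 0" using xy \<open>1 \<le> k\<close> by simp
  then have "transfer N A g \<psi> x - transfer N A g \<psi> y =
      (\<Sum>a\<in>?I. exp (g (scons a x)) * \<psi> (scons a x) - exp (g (scons a y)) * \<psi> (scons a y))"
    unfolding transfer_def by (simp add: sum_subtractf)
  then have "cmod (transfer N A g \<psi> x - transfer N A g \<psi> y) \<le>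
      (\<Sum>a\<in>?I. cmod (exp (g (scons a x)) * \<psi> (scons a x) - exp (g (scons a y)) * \<psi> (scons a y)))"
    by (simp add: norm_sum)
  also have "\<dots> \<le> real N * (b1 * (W + 3 * ?G * S))"
  proof (rule sum_le_card_mult)
    fix a assume "a \<in> ?I"
    let ?x = "scons a x" and ?y = "scons a y"
    have sx: "?x \<in> Sigma_A N A" and sy: "?y \<in> Sigma_A N A"
      using \<open>a \<in> ?I\<close> scons_in_Sigma_A x y \<open>x 0 = y 0\<close> by auto
    moreover have "\<forall>j<k + 1. ?x j = ?y j" using xy by (auto simp: scons_def)
    ultimately have "cmod (\<psi> ?x - \<psi> ?y) \<le> W" and "cmod (g ?x - g ?y) \<le> ?G"
      using osc g_osc unfolding var_le_ereal_iff by blast+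
    then have "cmod (\<psi> ?x - \<psi> ?y) + 3 * cmod (g ?x - g ?y) * cmod (\<psi> ?y) \<le> W + 3 * ?G * S"
      using bnd sy \<open>0 \<le> ?G\<close> by (intro add_mono mult_mono) auto
    moreover have "exp (Re (g ?x)) \<le> b1" and "exp (Re (g ?y)) \<le> b1"
      using H sx sy unfolding condH_def by auto
    ultimately show "cmod (exp (g ?x) * \<psi> ?x - exp (g ?y) * \<psi> ?y) \<le> b1 * (W + 3 * ?G * S)"
      using norm_exp_mult_diff_le \<open>0 \<le> b1\<close> by (meson mult_left_mono order_trans)
  qed (use \<open>0 \<le> b1\<close> \<open>0 \<le> S\<close> \<open>0 \<le> W\<close> \<open>0 \<le> ?G\<close> in auto)
  finally show ?thesis .
qed

lemma var_transfer_le: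
  fixes \<theta> :: "nat \<Rightarrow> real"
  assumes mono: "\<forall>m\<ge>1. \<theta> (Suc m) \<le> \<theta> m" and nonneg: "\<forall>m\<ge>1. 0 \<le> \<theta> m"
    and "0 \<le> b1" and "0 \<le> b2" and H: "condH N A \<theta> b1 b2 g" and "0 \<le> S" and "0 \<le> W"
    and bnd: "\<forall>x\<in>Sigma_A N A. cmod (\<psi> x) \<le> S"
    and osc: "\<forall>k. var N A (k + 1) \<psi> \<le> ereal (W * \<theta> (k + 1) ^ k)"
  shows "var N A k (transfer N A g \<psi>)
           \<le> ereal (real N * b1 * (2 * S + W + 3 * b2 * \<theta> 1 * S) * \<theta> (k + 1) ^ k)"
  unfolding var_le_ereal_iff
proof (intro ballI impI)
  fix x y assume x: "x \<in> Sigma_A N A" and y: "y \<in> Sigma_A N A" and xy: "\<forall>j<k. x j = y j"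
  let ?L = "transfer N A g \<psi>" and ?t = "\<theta> (k + 1) ^ k"
  have "0 \<le> \<theta> 1" and "0 \<le> \<theta> (k + 1)" using nonneg by auto
  show "cmod (?L x - ?L y) \<le> real N * b1 * (2 * S + W + 3 * b2 * \<theta> 1 * S) * ?t"
  proof (cases "k = 0")
    case True
    have "cmod (?L x - ?L y) \<le> cmod (?L x) + cmod (?L y)" by (rule norm_triangle_ineq4)
    also have "\<dots> \<le> real N * b1 * (2 * S)"
      using norm_transfer_le[OF H x bnd] norm_transfer_le[OF H y bnd] by (simp add: algebra_simps)
    also have "\<dots> \<le> real N * b1 * (2 * S + W + 3 * b2 * \<theta> 1 * S)"
      using \<open>0 \<le> b1\<close> \<open>0 \<le> b2\<close> \<open>0 \<le> S\<close> \<open>0 \<le> W\<close> \<open>0 \<le> \<theta> 1\<close>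
      by (intro mult_left_mono) auto
    finally show ?thesis using True by simp
  next
    case False
    have "\<theta> (k + 1) ^ (k + 1) \<le> \<theta> 1 * ?t"
      using theta_antimono[OF mono, of 1 "k + 1"] \<open>0 \<le> \<theta> (k + 1)\<close> by (simp add: mult_right_mono)
    then have "W * ?t + 3 * (b2 * \<theta> (k + 1) ^ (k + 1)) * S \<le> (W + 3 * b2 * \<theta> 1 * S) * ?t"
      using \<open>0 \<le> b2\<close> \<open>0 \<le> S\<close> by (simp add: algebra_simps mult_left_mono mult_right_mono)
    also have "\<dots> \<le> (2 * S + W + 3 * b2 * \<theta> 1 * S) * ?t"
      using \<open>0 \<le> S\<close> \<open>0 \<le> \<theta> (k + 1)\<close> by (intro mult_right_mono) auto
    finally have "real N * (b1 * (W * ?t + 3 * (b2 * \<theta> (k + 1) ^ (k + 1)) * S))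
        \<le> real N * b1 * (2 * S + W + 3 * b2 * \<theta> 1 * S) * ?t"
      using \<open>0 \<le> b1\<close> by (simp add: mult.assoc mult_left_mono)
    moreover have "cmod (?L x - ?L y) \<le> real N * (b1 * (W * ?t + 3 * (b2 * \<theta> (k + 1) ^ (k + 1)) * S))"
      using False osc by (intro norm_transfer_diff_le[OF H x y xy _ bnd]) auto
    ultimately show ?thesis by linarith
  qed
qed

lemma transfer_in_Bspace:
  fixes \<theta> :: "nat \<Rightarrow> real"
  assumes mono: "\<forall>m\<ge>1. \<theta> (Suc m) \<le> \<theta> m" and nonneg: "\<forall>m\<ge>1. 0 \<le> \<theta> m" and lim: "\<theta> \<longlonglongrightarrow> 0"
    and "0 \<le> b1" and "0 \<le> b2" and H: "condH N A \<theta> b1 b2 g" and "0 \<le> S" and "0 \<le> W"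
    and bnd: "\<forall>x\<in>Sigma_A N A. cmod (\<psi> x) \<le> S"
    and osc: "\<forall>k. var N A (k + 1) \<psi> \<le> ereal (W * \<theta> (k + 1) ^ k)"
  shows "transfer N A g \<psi> \<in> Bspace N A \<theta>"
    and "Bnorm N A \<theta> (transfer N A g \<psi>) \<le> real N * b1 * (3 * S + W + 3 * b2 * \<theta> 1 * S)"
proof -
  let ?c = "real N * b1 * (2 * S + W + 3 * b2 * \<theta> 1 * S)"
  have "0 \<le> \<theta> 1" using nonneg by simp
  then have "0 \<le> ?c" using assms(4,5,7,8) by simp
  note var_le = var_transfer_le[OF mono nonneg assms(4-8) bnd osc]
  show "transfer N A g \<psi> \<in> Bspace N A \<theta>"
    using var_le by (intro Bspace_memI[OF nonneg lim \<open>0 \<le> ?c\<close>]) blast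
  have "supnorm N A (transfer N A g \<psi>) \<le> real N * (b1 * S)"
    using norm_transfer_le[OF H _ bnd] assms(4,7) by (intro supnorm_le) auto
  moreover have "Bseminorm N A \<theta> (transfer N A g \<psi>) \<le> ?c"
    using var_le by (intro Bseminorm_le[OF \<open>0 \<le> ?c\<close>]) blast
  ultimately show "Bnorm N A \<theta> (transfer N A g \<psi>) \<le> real N * b1 * (3 * S + W + 3 * b2 * \<theta> 1 * S)"
    unfolding Bnorm_eq by (simp add: algebra_simps)
qed

text \<open>The summand \<open>1\<close> keeps the constant positive when \<open>N = 0\<close>.\<close>

definition transfer_bound :: "nat \<Rightarrow> (nat \<Rightarrow> real) \<Rightarrow> real \<Rightarrow> real \<Rightarrow> real" where
  "transfer_bound N \<theta> b1 b2 = real N * b1 * (5 + \<theta> 1 * (1 + 3 * b2)) + 1"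

lemma le_transfer_bound:
  assumes "0 \<le> b1" and "0 \<le> s" and "0 \<le> v"
    and "a \<le> 5 + \<theta> 1 * (1 + 3 * b2)" and "c \<le> 5 + \<theta> 1 * (1 + 3 * b2)"
  shows "real N * b1 * (a * s + c * v) \<le> transfer_bound N \<theta> b1 b2 * (s + v)"
proof -
  let ?M = "5 + \<theta> 1 * (1 + 3 * b2)"
  have "a * s + c * v \<le> ?M * s + ?M * v"
    using assms(2-5) by (intro add_mono mult_right_mono) auto
  then have "a * s + c * v \<le> ?M * (s + v)" by (simp add: distrib_left)
  then have "real N * b1 * (a * s + c * v) \<le> real N * b1 * (?M * (s + v))"
    using \<open>0 \<le> b1\<close> by (intro mult_left_mono) auto
  then show ?thesis
    using assms(2,3) unfolding transfer_bound_def by (simp add: algebra_simps)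
qed

lemma transfer_bound_pos:
  assumes "0 \<le> b1" and "0 \<le> b2" and "0 \<le> \<theta> 1"
  shows "0 < transfer_bound N \<theta> b1 b2"
  using assms unfolding transfer_bound_def by (simp add: add_nonneg_pos)

lemma opnorm_le_transfer:
  fixes \<theta> :: "nat \<Rightarrow> real"
  assumes mono: "\<forall>m\<ge>1. \<theta> (Suc m) \<le> \<theta> m" and nonneg: "\<forall>m\<ge>1. 0 \<le> \<theta> m" and lim: "\<theta> \<longlonglongrightarrow> 0"
    and "0 \<le> b1" and "0 \<le> b2" and H: "condH N A \<theta> b1 b2 g"
  shows "opnorm_le N A \<theta> (transfer N A g) (transfer_bound N \<theta> b1 b2)"
  unfolding opnorm_le_def
proof (intro ballI conjI)
  fix \<phi> assume B: "\<phi> \<in> Bspace N A \<theta>"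
  let ?s = "supnorm N A \<phi>" and ?v = "Bseminorm N A \<theta> \<phi>"
  have "0 \<le> \<theta> 1" using nonneg by simp
  have osc: "\<forall>k. var N A (k + 1) \<phi> \<le> ereal (\<theta> 1 * ?v * \<theta> (k + 1) ^ k)"
    using var_Suc_le_Bseminorm[OF mono nonneg B] by blast
  have W: "0 \<le> \<theta> 1 * ?v" using \<open>0 \<le> \<theta> 1\<close> Bseminorm_nonneg[OF B] by simp
  have bnd: "\<forall>x\<in>Sigma_A N A. cmod (\<phi> x) \<le> ?s" using norm_le_supnorm[OF B] by blast
  note L = transfer_in_Bspace[OF mono nonneg lim assms(4-6) supnorm_nonneg[OF B] W bnd osc]
  show "transfer N A g \<phi> \<in> Bspace N A \<theta>" by (rule L(1))
  have "real N * b1 * ((3 + 3 * b2 * \<theta> 1) * ?s + \<theta> 1 * ?v) \<le> transfer_bound N \<theta> b1 b2 * (?s + ?v)"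
    using assms(4,5) \<open>0 \<le> \<theta> 1\<close> supnorm_nonneg[OF B] Bseminorm_nonneg[OF B]
    by (intro le_transfer_bound) (auto simp: algebra_simps)
  then show "Bnorm N A \<theta> (transfer N A g \<phi>) \<le> transfer_bound N \<theta> b1 b2 * Bnorm N A \<theta> \<phi>"
    using L(2) unfolding Bnorm_eq by (simp add: algebra_simps)
qed

lemma transfer_sub_Kop:
  "transfer N A g \<phi> - Kop N A \<mu> g m \<phi> = transfer N A g (\<lambda>\<omega>. \<phi> \<omega> - cond_exp N A \<mu> m \<phi> \<omega>)"
  unfolding Kop_def transfer_def by (rule ext) (simp add: sum_subtractf right_diff_distrib)

lemma opnorm_le_transfer_sub_Kop:
  fixes \<theta> :: "nat \<Rightarrow> real"
  assumes mono: "\<forall>m\<ge>1. \<theta> (Suc m) \<le> \<theta> m" and nonneg: "\<forall>m\<ge>1. 0 \<le> \<theta> m" and lim: "\<theta> \<longlonglongrightarrow> 0"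
    and "0 \<le> b1" and "0 \<le> b2" and H: "condH N A \<theta> b1 b2 g"
    and gm: "good_measure N A \<mu>" and "1 \<le> m" and "\<theta> (m + 1) \<le> 1"
  shows "opnorm_le N A \<theta> (\<lambda>\<phi>. transfer N A g \<phi> - Kop N A \<mu> g m \<phi>) (transfer_bound N \<theta> b1 b2 * \<theta> (m + 1))"
  unfolding opnorm_le_def transfer_sub_Kop
proof (intro ballI conjI)
  fix \<phi> assume B: "\<phi> \<in> Bspace N A \<theta>"
  let ?v = "Bseminorm N A \<theta> \<phi>" and ?\<tau> = "\<theta> (m + 1)"
  have "0 \<le> ?v" using Bseminorm_nonneg[OF B] .
  have "0 \<le> ?\<tau>" and "0 \<le> \<theta> 1" using nonneg by auto
  have "?\<tau> ^ m \<le> ?\<tau>"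
    using theta_power_le_shifted[OF mono nonneg _ \<open>?\<tau> \<le> 1\<close>, of 0] \<open>1 \<le> m\<close> by simp
  then have bnd: "\<forall>x\<in>Sigma_A N A. cmod (\<phi> x - cond_exp N A \<mu> m \<phi> x) \<le> ?v * ?\<tau>"
    using norm_sub_cond_exp_le_Bseminorm[OF nonneg lim gm B] \<open>0 \<le> ?v\<close>
    by (meson mult_left_mono order_trans)
  have osc: "\<forall>k. var N A (k + 1) (\<lambda>\<omega>. \<phi> \<omega> - cond_exp N A \<mu> m \<phi> \<omega>) \<le> ereal (2 * ?v * ?\<tau> * \<theta> (k + 1) ^ k)"
    using var_sub_cond_exp_le[OF mono nonneg lim gm B \<open>?\<tau> \<le> 1\<close>] by blast
  have "0 \<le> ?v * ?\<tau>" and "0 \<le> 2 * ?v * ?\<tau>" using \<open>0 \<le> ?v\<close> \<open>0 \<le> ?\<tau>\<close> by simp_all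
  note L = transfer_in_Bspace[OF mono nonneg lim assms(4-6) this bnd osc]
  show "transfer N A g (\<lambda>\<omega>. \<phi> \<omega> - cond_exp N A \<mu> m \<phi> \<omega>) \<in> Bspace N A \<theta>"
    by (rule L(1))
  have "real N * b1 * (0 * supnorm N A \<phi> + (5 + 3 * b2 * \<theta> 1) * ?v)
      \<le> transfer_bound N \<theta> b1 b2 * (supnorm N A \<phi> + ?v)"
    using assms(4,5) \<open>0 \<le> \<theta> 1\<close> supnorm_nonneg[OF B] \<open>0 \<le> ?v\<close>
    by (intro le_transfer_bound) (auto simp: algebra_simps)
  then have "real N * b1 * (3 * (?v * ?\<tau>) + 2 * ?v * ?\<tau> + 3 * b2 * \<theta> 1 * (?v * ?\<tau>))
      \<le> transfer_bound N \<theta> b1 b2 * ?\<tau> * Bnorm N A \<theta> \<phi>"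
    using mult_right_mono[OF _ \<open>0 \<le> ?\<tau>\<close>] unfolding Bnorm_eq
    by (fastforce simp: algebra_simps)
  then show "Bnorm N A \<theta> (transfer N A g (\<lambda>\<omega>. \<phi> \<omega> - cond_exp N A \<mu> m \<phi> \<omega>))
      \<le> transfer_bound N \<theta> b1 b2 * ?\<tau> * Bnorm N A \<theta> \<phi>"
    using L(2) by simp
qed

lemma transfer_pow_sub_Kq:
  "(\<lambda>\<phi>. (transfer N A g ^^ q) \<phi> - Kq N A \<mu> g m q \<phi>) = (\<lambda>\<phi>. transfer N A g \<phi> - Kop N A \<mu> g m \<phi>) ^^ q"
  unfolding Kq_def by (simp add: fun_diff_def)

lemma opnorm_le_funpow:
  assumes "opnorm_le N A \<theta> T c" and "0 \<le> c"
  shows "opnorm_le N A \<theta> (T ^^ n) (c ^ n)"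
proof (induction n)
  case 0
  then show ?case unfolding opnorm_le_def by simp
next
  case (Suc n)
  show ?case unfolding opnorm_le_def
  proof
    fix \<phi> assume "\<phi> \<in> Bspace N A \<theta>"
    then have "(T ^^ n) \<phi> \<in> Bspace N A \<theta>" and n: "Bnorm N A \<theta> ((T ^^ n) \<phi>) \<le> c ^ n * Bnorm N A \<theta> \<phi>"
      using Suc.IH unfolding opnorm_le_def by auto
    then have "T ((T ^^ n) \<phi>) \<in> Bspace N A \<theta>"
      and "Bnorm N A \<theta> (T ((T ^^ n) \<phi>)) \<le> c * Bnorm N A \<theta> ((T ^^ n) \<phi>)"
      using assms(1) unfolding opnorm_le_def by auto
    moreover have "c * Bnorm N A \<theta> ((T ^^ n) \<phi>) \<le> c * (c ^ n * Bnorm N A \<theta> \<phi>)"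
      using n \<open>0 \<le> c\<close> by (rule mult_left_mono)
    ultimately show "(T ^^ Suc n) \<phi> \<in> Bspace N A \<theta> \<and>
        Bnorm N A \<theta> ((T ^^ Suc n) \<phi>) \<le> c ^ Suc n * Bnorm N A \<theta> \<phi>"
      by (simp add: mult.assoc)
  qed
qed

theorem lemma3p6:
  fixes N :: nat and \<theta> :: "nat \<Rightarrow> real" and b1 b2 :: real
  assumes "\<forall>m\<ge>1. \<theta> (Suc m) \<le> \<theta> m" and "\<forall>m\<ge>1. \<theta> m \<ge> 0" and "\<theta> \<longlonglongrightarrow> 0"
    and "b1 > 0" and "b2 > 0"
  shows "\<exists>C2>0. \<forall>A \<mu>. zero_one_matrix N A \<and> aperiodic N A \<and> good_measure N A \<mu> \<longrightarrow>
           (\<forall>m q g. m \<ge> 1 \<and> q \<ge> 1 \<and> \<theta> (m + 1) \<le> 1 \<and> g \<in> Vspace N A \<and> condH N A \<theta> b1 b2 g \<longrightarrow>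
              opnorm_le N A \<theta> (transfer N A g) C2 \<and>
              opnorm_le N A \<theta> (\<lambda>\<phi>. (transfer N A g ^^ q) \<phi> - Kq N A \<mu> g m q \<phi>)
                 (C2 ^ q * \<theta> (m + 1) ^ q))"
proof -
  note mono = assms(1) and nonneg = assms(2) and lim = assms(3)
  have b: "0 \<le> b1" "0 \<le> b2" using assms(4,5) by auto
  let ?C = "transfer_bound N \<theta> b1 b2"
  have "0 < ?C" using b nonneg by (intro transfer_bound_pos) auto
  moreover have "opnorm_le N A \<theta> (transfer N A g) ?C \<and>
      opnorm_le N A \<theta> (\<lambda>\<phi>. (transfer N A g ^^ q) \<phi> - Kq N A \<mu> g m q \<phi>) (?C ^ q * \<theta> (m + 1) ^ q)"
    if "good_measure N A \<mu>" and "1 \<le> m" and "\<theta> (m + 1) \<le> 1" and H: "condH N A \<theta> b1 b2 g"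
    for A \<mu> m q g
  proof
    show "opnorm_le N A \<theta> (transfer N A g) ?C"
      by (rule opnorm_le_transfer[OF mono nonneg lim b H])
    have "opnorm_le N A \<theta> ((\<lambda>\<phi>. transfer N A g \<phi> - Kop N A \<mu> g m \<phi>) ^^ q) ((?C * \<theta> (m + 1)) ^ q)"
      using opnorm_le_transfer_sub_Kop[OF mono nonneg lim b H that(1-3)] \<open>0 < ?C\<close> nonneg
      by (intro opnorm_le_funpow) auto
    then show "opnorm_le N A \<theta> (\<lambda>\<phi>. (transfer N A g ^^ q) \<phi> - Kq N A \<mu> g m q \<phi>)
        (?C ^ q * \<theta> (m + 1) ^ q)"
      by (simp add: transfer_pow_sub_Kq power_mult_distrib)
  qed
  ultimately show ?thesis by blast
qed

end
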